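(* Let $E$ be a Hermite–Biehler entire function with no real zeros, and let $f \in \mathcal{H}^{\infty}(E)$ be a real entire function. Suppose that $f(\xi) = \lvert E(\xi)\rvert \, \lVert f/E\rVert_{\infty}$ for some $\xi \in \mathbb{R}$. Let $\alpha \in \mathbb{R}$ be such that $E(\xi) = e^{-i\alpha}\lvert E(\xi)\rvert$, and let $b_l$ and $b_r$ denote the simple zeros of $B_\alpha$ to the left and to the right of $\xi$, respectively. Then $$f(x) \geq \lVert f/E\rVert_{\infty}\, A_\alpha(x), \qquad b_l \leq x \leq b_r.$$
   Context: An entire function $E$ is Hermite–Biehler ($E \in HB$) if $\lvert E(\overline{z})\rvert < \lvert E(z)\rvert$ for all $z$ in the upper half-plane $\mathbb{C}_+$. For an entire function $g$, $g^{\#}(z) = \overline{g(\overline{z})}$; $g$ is real entire if it is real on the real axis. $\mathcal{H}^{\infty}(E)$ is the set of entire functions $f$ such that $f/E$ and $f^{\#}/E$ are bounded analytic functions on $\mathbb{C}_+$, with $\lVert f/E\rVert_\infty = \sup_{x\in\mathbb{R}} \lvert f(x)/E(x)\rvert$. For $\alpha\in\mathbb{R}$, write $E_\alpha = e^{i\alpha}E = A_\alpha + iB_\alpha$, where $A_\alpha = (E_\alpha + E_\alpha^{\#})/2$ and $B_\alpha = (E_\alpha - E_\alpha^{\#})/(2i)$ are real entire functions. *)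

theory Defs
  imports "HOL-Analysis.Analysis"
begin

definition entire :: "(complex \<Rightarrow> complex) \<Rightarrow> bool" where
  "entire g \<longleftrightarrow> g holomorphic_on UNIV"

definition sharp :: "(complex \<Rightarrow> complex) \<Rightarrow> complex \<Rightarrow> complex" where
  "sharp g z = cnj (g (cnj z))"

definition hermite_biehler :: "(complex \<Rightarrow> complex) \<Rightarrow> bool" where
  "hermite_biehler E \<longleftrightarrow> entire E \<and>
     (\<forall>z. Im z > 0 \<longrightarrow> cmod (E (cnj z)) < cmod (E z))"

definition real_entire :: "(complex \<Rightarrow> complex) \<Rightarrow> bool" where
  "real_entire g \<longleftrightarrow> entire g \<and> (\<forall>x::real. g (complex_of_real x) \<in> \<real>)"

definition Hinf :: "(complex \<Rightarrow> complex) \<Rightarrow> (complex \<Rightarrow> complex) set" where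
  "Hinf E = {f. entire f \<and>
     (\<lambda>z. f z / E z) analytic_on {z. Im z > 0} \<and>
     (\<lambda>z. sharp f z / E z) analytic_on {z. Im z > 0} \<and>
     bounded ((\<lambda>z. f z / E z) ` {z. Im z > 0}) \<and>
     bounded ((\<lambda>z. sharp f z / E z) ` {z. Im z > 0})}"

definition Hinf_norm :: "(complex \<Rightarrow> complex) \<Rightarrow> (complex \<Rightarrow> complex) \<Rightarrow> real" where
  "Hinf_norm E f = (SUP x::real. cmod (f (complex_of_real x) / E (complex_of_real x)))"

definition E_rot :: "(complex \<Rightarrow> complex) \<Rightarrow> real \<Rightarrow> complex \<Rightarrow> complex" where
  "E_rot E \<alpha> z = exp (\<i> * complex_of_real \<alpha>) * E z"

definition A_fun :: "(complex \<Rightarrow> complex) \<Rightarrow> real \<Rightarrow> complex \<Rightarrow> complex" where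
  "A_fun E \<alpha> z = (E_rot E \<alpha> z + sharp (E_rot E \<alpha>) z) / 2"

definition B_fun :: "(complex \<Rightarrow> complex) \<Rightarrow> real \<Rightarrow> complex \<Rightarrow> complex" where
  "B_fun E \<alpha> z = (E_rot E \<alpha> z - sharp (E_rot E \<alpha>) z) / (2 * \<i>)"

end

theory Submission
  imports Defs "HOL-Complex_Analysis.Complex_Analysis"
begin

text \<open>Let \<open>M = \<parallel>f/E\<parallel>\<^sub>\<infinity>\<close>. By Phragmen-Lindelof, \<open>|f| \<le> M |E|\<close> on the closed upper
  half-plane, so for every constant \<open>c\<close> with \<open>|c| > M\<close> the entire function \<open>G = c E\<^sub>\<alpha> - f\<close>
  still satisfies \<open>|G(z\<^sup>*)| \<le> |G(z)|\<close> for \<open>Im z > 0\<close>. Such functions have nonincreasing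
  argument along the real line, and so does \<open>E\<^sub>\<alpha> = A\<^sub>\<alpha> + i B\<^sub>\<alpha>\<close>, which is real and positive
  at \<open>\<xi>\<close>. If \<open>f(x) < M A\<^sub>\<alpha>(x)\<close> at some \<open>x\<close> between \<open>\<xi>\<close> and the next zero of \<open>B\<^sub>\<alpha>\<close>, a
  small rotation and enlargement \<open>c\<close> of \<open>M\<close> produces a \<open>G\<close> whose argument increases from \<open>\<xi>\<close>
  to \<open>x\<close>, a contradiction.\<close>

definition weakly_hermite_biehler :: "(complex \<Rightarrow> complex) \<Rightarrow> bool" where
  "weakly_hermite_biehler G \<longleftrightarrow> G holomorphic_on UNIV \<and>
     (\<forall>z. Im z > 0 \<longrightarrow> cmod (G (cnj z)) \<le> cmod (G z))"

text \<open>\<open>Re (w x) / Im (w x)\<close> is the cotangent of \<open>arg (w x)\<close>, so its monotonicity on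
  the intervals where \<open>Im w\<close> does not vanish says that \<open>arg w\<close> never increases.\<close>

definition turns_clockwise :: "(real \<Rightarrow> complex) \<Rightarrow> bool" where
  "turns_clockwise w \<longleftrightarrow> (\<forall>u v. u \<le> v \<longrightarrow> (\<forall>x\<in>{u..v}. Im (w x) \<noteq> 0) \<longrightarrow>
     Re (w u) / Im (w u) \<le> Re (w v) / Im (w v))"

lemma hermite_biehler_imp_weakly_hermite_biehler:
  "hermite_biehler E \<Longrightarrow> weakly_hermite_biehler E"
  by (simp add: hermite_biehler_def weakly_hermite_biehler_def entire_def less_imp_le)

lemma weakly_hermite_biehler_cmult:
  "weakly_hermite_biehler E \<Longrightarrow> weakly_hermite_biehler (\<lambda>z. c * E z)"
  unfolding weakly_hermite_biehler_def by (auto simp: norm_mult intro: holomorphic_intros mult_left_mono)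

lemma hermite_biehler_nonzero:
  assumes "hermite_biehler E" "\<forall>x::real. E (of_real x) \<noteq> 0" "Im z \<ge> 0"
  shows "E z \<noteq> 0"
proof (cases "Im z = 0")
  case True
  then have "z = of_real (Re z)" by (simp add: complex_eq_iff)
  then show ?thesis using assms(2) by metis
next
  case False
  with assms(1,3) have "cmod (E (cnj z)) < cmod (E z)" by (simp add: hermite_biehler_def)
  then show ?thesis by auto
qed

lemma closure_upper_half_plane: "closure {z. Im z > 0} = {z. Im z \<ge> 0}"
  using closure_halfspace_gt[of \<i> 0] by (simp add: inner_complex_def)

lemma has_real_derivative_norm_power2_along_line:
  assumes "(G has_field_derivative D) (at (z + of_real t * w))"
  shows "((\<lambda>s. (cmod (G (z + of_real s * w)))\<^sup>2) has_real_derivative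
           2 * Re (cnj (G (z + of_real t * w)) * (w * D))) (at t)"
proof -
  have "((\<lambda>s. z + of_real s * w) has_vector_derivative w) (at t)"
    by (auto intro!: derivative_eq_intros simp: has_vector_derivative_def scaleR_conv_of_real)
  from field_vector_diff_chain_at[OF this, simplified, OF assms]
  have "((\<lambda>s. G (z + of_real s * w)) has_vector_derivative w * D) (at t)"
    by (simp add: o_def)
  then show ?thesis
    unfolding cmod_power2 by (auto intro!: derivative_eq_intros simp: power2_eq_square algebra_simps)
qed

text \<open>The function \<open>t \<mapsto> |G(x + it)|\<^sup>2 - |G(x - it)|\<^sup>2\<close> vanishes at \<open>0\<close> and is
  nonnegative for \<open>t > 0\<close>, so its derivative \<open>-4 Im (cnj (G x) * G' x)\<close> at \<open>0\<close> is nonnegative.\<close>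

lemma weakly_hermite_biehler_Im_cnj_mult_deriv_nonpos:
  assumes "weakly_hermite_biehler G"
  shows "Im (cnj (G (of_real x)) * deriv G (of_real x)) \<le> 0"
proof (rule ccontr)
  assume pos: "\<not> ?thesis"
  have dG: "(G has_field_derivative deriv G z) (at z)" for z
    using assms holomorphic_derivI[of G UNIV] by (auto simp: weakly_hermite_biehler_def)
  define h where
    "h t = (cmod (G (of_real x + of_real t * \<i>)))\<^sup>2 - (cmod (G (of_real x + of_real t * - \<i>)))\<^sup>2"
    for t
  have "((\<lambda>t. (cmod (G (of_real x + of_real t * w)))\<^sup>2) has_real_derivative
          2 * Re (cnj (G (of_real x)) * (w * deriv G (of_real x)))) (at 0)" for w :: complex
    using has_real_derivative_norm_power2_along_line[where z = "of_real x" and t = 0, OF dG] by simp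
  from DERIV_diff[OF this[of \<i>] this[of "- \<i>"]]
  have "(h has_real_derivative - 4 * Im (cnj (G (of_real x)) * deriv G (of_real x))) (at 0)"
    unfolding h_def by (simp add: algebra_simps)
  moreover have "- 4 * Im (cnj (G (of_real x)) * deriv G (of_real x)) < 0" using pos by simp
  ultimately obtain d where "d > 0" and dec: "\<And>t. 0 < t \<Longrightarrow> t < d \<Longrightarrow> h (0 + t) < h 0"
    using DERIV_neg_dec_right by blast
  define z where "z = of_real x + of_real (d / 2) * \<i>"
  have "Im z > 0" "cnj z = of_real x + of_real (d / 2) * - \<i>" using \<open>d > 0\<close> by (simp_all add: z_def)
  with assms have "cmod (G (of_real x + of_real (d / 2) * - \<i>)) \<le> cmod (G z)"
    unfolding weakly_hermite_biehler_def by metis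
  then have "h (d / 2) \<ge> 0" unfolding h_def z_def by (simp add: power_mono)
  moreover have "h 0 = 0" by (simp add: h_def)
  ultimately show False using dec[of "d / 2"] \<open>d > 0\<close> by simp
qed

lemma weakly_hermite_biehler_turns_clockwise:
  assumes "weakly_hermite_biehler G"
  shows "turns_clockwise (\<lambda>x. G (of_real x))"
  unfolding turns_clockwise_def
proof (intro allI impI)
  fix u v :: real
  assume "u \<le> v" and nz: "\<forall>x\<in>{u..v}. Im (G (of_real x)) \<noteq> 0"
  define r where "r x = Re (G (of_real x))" for x
  define i where "i x = Im (G (of_real x))" for x
  have dG: "((\<lambda>x. G (of_real x)) has_vector_derivative deriv G (of_real x)) (at x)" for x
    using assms holomorphic_derivI[of G UNIV]
    by (auto simp: weakly_hermite_biehler_def intro!: has_vector_derivative_real_field)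
  have dq: "((\<lambda>x. r x / i x) has_real_derivative
      - Im (cnj (G (of_real x)) * deriv G (of_real x)) / (i x * i x)) (at x)" if "i x \<noteq> 0" for x
    unfolding r_def i_def using that
    by (auto intro!: derivative_eq_intros dG simp: i_def power2_eq_square algebra_simps)
  show "Re (G (of_real u)) / Im (G (of_real u)) \<le> Re (G (of_real v)) / Im (G (of_real v))"
    unfolding r_def[symmetric] i_def[symmetric]
  proof (rule DERIV_nonneg_imp_increasing_open[OF \<open>u \<le> v\<close>])
    fix x assume "u < x" "x < v"
    with nz have "i x \<noteq> 0" by (simp add: i_def)
    moreover have "0 \<le> - Im (cnj (G (of_real x)) * deriv G (of_real x)) / (i x * i x)"
      using weakly_hermite_biehler_Im_cnj_mult_deriv_nonpos[OF assms, of x] by simp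
    ultimately show "\<exists>y. ((\<lambda>x. r x / i x) has_real_derivative y) (at x) \<and> 0 \<le> y"
      using dq by blast
  next
    show "continuous_on {u..v} (\<lambda>x. r x / i x)"
      using dq nz by (intro continuous_at_imp_continuous_on) (auto intro: DERIV_isCont simp: i_def)
  qed
qed

lemma turns_clockwise_reflect:
  assumes "turns_clockwise w"
  shows "turns_clockwise (\<lambda>x. cnj (w (- x)))"
  unfolding turns_clockwise_def
proof (intro allI impI)
  fix u v :: real
  assume "u \<le> v" and nz: "\<forall>x\<in>{u..v}. Im (cnj (w (- x))) \<noteq> 0"
  have "\<forall>x\<in>{- v..- u}. Im (w x) \<noteq> 0"
  proof
    fix x assume "x \<in> {- v..- u}"
    then show "Im (w x) \<noteq> 0" using nz[rule_format, of "- x"] by simp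
  qed
  with \<open>u \<le> v\<close> assms have "Re (w (- v)) / Im (w (- v)) \<le> Re (w (- u)) / Im (w (- u))"
    by (simp add: turns_clockwise_def)
  then show "Re (cnj (w (- u))) / Im (cnj (w (- u))) \<le> Re (cnj (w (- v))) / Im (cnj (w (- v)))"
    by simp
qed

lemma norm_one_minus_i_mult_ge_1:
  assumes "Im z \<ge> 0" "e \<ge> 0"
  shows "1 \<le> cmod (1 - \<i> * of_real e * z)"
proof -
  have "Re (1 - \<i> * of_real e * z) = 1 + e * Im z" by simp
  moreover have "1 + e * Im z \<ge> 1" using assms by simp
  ultimately show ?thesis using abs_Re_le_cmod[of "1 - \<i> * of_real e * z"] by linarith
qed

lemma norm_one_minus_i_mult_ge:
  assumes "Im z \<ge> 0" "e \<ge> 0"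
  shows "e * cmod z \<le> cmod (1 - \<i> * of_real e * z)"
proof -
  have "(e * cmod z)\<^sup>2 = e\<^sup>2 * ((Re z)\<^sup>2 + (Im z)\<^sup>2)" by (simp add: power_mult_distrib cmod_power2)
  also have "\<dots> \<le> (1 + e * Im z)\<^sup>2 + (e * Re z)\<^sup>2" using assms
    by (simp add: power2_eq_square algebra_simps)
  also have "\<dots> = (cmod (1 - \<i> * of_real e * z))\<^sup>2"
    by (simp only: cmod_power2) (simp add: power2_eq_square algebra_simps)
  finally show ?thesis using assms by (metis power2_le_imp_le norm_ge_zero)
qed

text \<open>Maximum modulus principle for \<open>g z / (1 - \<i> e z)\<close> on a large half-disc: the damping
  factor makes the bound \<open>C\<close> on the arc irrelevant.\<close>

lemma phragmen_lindelof_damped: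
  fixes g :: "complex \<Rightarrow> complex"
  assumes holg: "g holomorphic_on U" and "open U" and U: "{z. Im z \<ge> 0} \<subseteq> U"
    and le_C: "\<And>z. Im z > 0 \<Longrightarrow> cmod (g z) \<le> C"
    and le_B: "\<And>x::real. cmod (g (of_real x)) \<le> B"
    and "B > 0" "e > 0" and z0: "Im z0 > 0"
  shows "cmod (g z0) \<le> B * cmod (1 - \<i> * of_real e * z0)"
proof -
  define d where "d z = 1 - \<i> * of_real e * z" for z
  define h where "h z = g z / d z" for z
  define R where "R = max (cmod z0 + 1) (C / (e * B))"
  define S where "S = {z. Im z > 0} \<inter> ball 0 R"
  have d_ge_1: "1 \<le> cmod (d z)" if "Im z \<ge> 0" for z
    using norm_one_minus_i_mult_ge_1[OF that] \<open>e > 0\<close> by (simp add: d_def)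
  have "open S" unfolding S_def by (intro open_Int open_halfspace_Im_gt open_ball)
  have clS: "closure S \<subseteq> {z. Im z \<ge> 0} \<inter> cball 0 R"
    unfolding S_def by (intro closure_minimal closed_Int closed_halfspace_Im_ge closed_cball) auto
  have "h holomorphic_on U \<inter> {z. d z \<noteq> 0}"
    unfolding h_def d_def by (intro holomorphic_intros holomorphic_on_subset[OF holg]) auto
  moreover have "closure S \<subseteq> U \<inter> {z. d z \<noteq> 0}"
    using clS U d_ge_1 by fastforce
  ultimately have hol_clS: "h holomorphic_on closure S" by (rule holomorphic_on_subset)
  then have "continuous_on (closure S) h" by (rule holomorphic_on_imp_continuous_on)
  from hol_clS closure_subset have "h holomorphic_on S" by (rule holomorphic_on_subset)
  have "cmod (h z0) \<le> B"
  proof (rule maximum_modulus_frontier[where f = h and S = S])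
    show "h holomorphic_on interior S"
      using \<open>h holomorphic_on S\<close> \<open>open S\<close> by (simp add: interior_open)
    show "continuous_on (closure S) h" by fact
    show "bounded S" unfolding S_def by (intro bounded_Int) auto
    show "z0 \<in> S" using z0 by (auto simp: S_def R_def)
  next
    fix w assume "w \<in> frontier S"
    then have "w \<in> closure S" "w \<notin> S" using \<open>open S\<close> by (auto simp: frontier_def interior_open)
    then have w: "Im w \<ge> 0" "cmod w \<le> R" using clS by auto
    show "cmod (h w) \<le> B"
    proof (cases "Im w = 0")
      case True
      then have "w = of_real (Re w)" by (simp add: complex_eq_iff)
      then have "cmod (g w) \<le> B" using le_B by metis
      also have "B \<le> B * cmod (d w)" using d_ge_1[OF w(1)] \<open>B > 0\<close> by simp
      finally show ?thesis
        using d_ge_1[OF w(1)] \<open>B > 0\<close> by (simp add: h_def norm_divide divide_le_eq)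
    next
      case False
      with w \<open>w \<notin> S\<close> have "Im w > 0" "cmod w = R" by (auto simp: S_def)
      have "C \<ge> 0" using le_C[OF \<open>Im w > 0\<close>] norm_ge_zero order_trans by blast
      have "e * R \<le> cmod (d w)"
        using norm_one_minus_i_mult_ge[OF w(1)] \<open>e > 0\<close> \<open>cmod w = R\<close> by (simp add: d_def)
      moreover have "R > 0" by (simp add: R_def less_max_iff_disj add_nonneg_pos)
      ultimately have "cmod (h w) \<le> C / (e * R)"
        unfolding h_def norm_divide using le_C[OF \<open>Im w > 0\<close>] \<open>e > 0\<close> \<open>C \<ge> 0\<close> by (intro frac_le) auto
      also have "\<dots> \<le> B"
      proof -
        have "C / (e * B) \<le> R" by (simp add: R_def)
        then have "C \<le> B * (e * R)"
          using \<open>e > 0\<close> \<open>B > 0\<close> by (simp add: pos_divide_le_eq algebra_simps)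
        then show ?thesis using \<open>e > 0\<close> \<open>R > 0\<close> by (simp add: divide_le_eq)
      qed
      finally show ?thesis .
    qed
  qed
  moreover have "g z0 = h z0 * d z0" using d_ge_1[of z0] z0 by (auto simp: h_def)
  ultimately show ?thesis
    using \<open>B > 0\<close> by (simp add: norm_mult d_def mult_right_mono)
qed

lemma phragmen_lindelof_upper_half_plane:
  fixes g :: "complex \<Rightarrow> complex"
  assumes "g holomorphic_on U" "open U" "{z. Im z \<ge> 0} \<subseteq> U"
    and "\<And>z. Im z > 0 \<Longrightarrow> cmod (g z) \<le> C"
    and le_B: "\<And>x::real. cmod (g (of_real x)) \<le> B"
    and "Im z \<ge> 0"
  shows "cmod (g z) \<le> B"
proof (cases "Im z = 0")
  case True
  then have "z = of_real (Re z)" by (simp add: complex_eq_iff)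
  then show ?thesis using le_B by metis
next
  case False
  with \<open>Im z \<ge> 0\<close> have "Im z > 0" by simp
  show ?thesis
  proof (rule dense_ge)
    fix B' assume "B < B'"
    with le_B[of 0] have "B' > 0" by (meson norm_ge_zero order_le_less_trans)
    have "((\<lambda>e. B' * cmod (1 - \<i> * of_real e * z)) \<longlongrightarrow> B' * cmod (1 - \<i> * of_real 0 * z))
        (at_right 0)"
      by (intro tendsto_intros)
    moreover have "\<forall>\<^sub>F e in at_right 0. cmod (g z) \<le> B' * cmod (1 - \<i> * of_real e * z)"
      using eventually_at_right_less[of 0]
    proof eventually_elim
      case (elim e)
      show ?case
        using phragmen_lindelof_damped[OF assms(1-4) _ \<open>B' > 0\<close> elim \<open>Im z > 0\<close>]
          le_B \<open>B < B'\<close> by (meson less_imp_le order_trans)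
    qed
    ultimately show "cmod (g z) \<le> B'"
      by (simp add: tendsto_lowerbound)
  qed
qed

lemma Hinf_norm_ge_real:
  assumes "hermite_biehler E" "\<forall>x::real. E (of_real x) \<noteq> 0" "f \<in> Hinf E"
  shows "cmod (f (of_real x) / E (of_real x)) \<le> Hinf_norm E f"
proof -
  obtain K where K: "\<forall>z\<in>{z. Im z > 0}. cmod (f z / E z) \<le> K"
    using assms(3) unfolding Hinf_def bounded_iff by auto
  have "continuous_on {z. Im z \<ge> 0} (\<lambda>z. f z / E z)"
    using assms hermite_biehler_nonzero[OF assms(1,2)]
    by (intro continuous_on_divide holomorphic_on_imp_continuous_on)
      (auto simp: hermite_biehler_def Hinf_def entire_def)
  then have "cmod (f (of_real y) / E (of_real y)) \<le> K" for y
    using K continuous_on_closure_norm_le[of "{z. Im z > 0}" "\<lambda>z. f z / E z" K "of_real y"]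
    by (simp add: closure_upper_half_plane)
  then have "bdd_above (range (\<lambda>y. cmod (f (of_real y) / E (of_real y))))"
    by (auto intro!: bdd_aboveI[of _ K])
  then show ?thesis unfolding Hinf_norm_def by (rule cSUP_upper[OF UNIV_I])
qed

lemma Hinf_norm_nonneg:
  "hermite_biehler E \<Longrightarrow> \<forall>x::real. E (of_real x) \<noteq> 0 \<Longrightarrow> f \<in> Hinf E \<Longrightarrow> 0 \<le> Hinf_norm E f"
  using order_trans[OF norm_ge_zero Hinf_norm_ge_real] by blast

lemma Hinf_norm_bound:
  assumes HB: "hermite_biehler E" and nz: "\<forall>x::real. E (of_real x) \<noteq> 0"
    and f: "f \<in> Hinf E" and "Im z \<ge> 0"
  shows "cmod (f z) \<le> Hinf_norm E f * cmod (E z)"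
proof -
  have holE: "E holomorphic_on UNIV" and holf: "f holomorphic_on UNIV"
    using HB f by (auto simp: hermite_biehler_def Hinf_def entire_def)
  obtain K where K: "\<forall>z\<in>{z. Im z > 0}. cmod (f z / E z) \<le> K"
    using f unfolding Hinf_def bounded_iff by auto
  have "cmod (f z / E z) \<le> Hinf_norm E f"
  proof (rule phragmen_lindelof_upper_half_plane[where g = "\<lambda>z. f z / E z" and U = "{z. E z \<noteq> 0}"])
    show "(\<lambda>z. f z / E z) holomorphic_on {z. E z \<noteq> 0}"
      by (intro holomorphic_intros holomorphic_on_subset[OF holf] holomorphic_on_subset[OF holE]) auto
    show "open {z. E z \<noteq> 0}"
      by (intro open_Collect_neq holomorphic_on_imp_continuous_on holE continuous_on_const)
  qed (use K hermite_biehler_nonzero[OF HB nz] Hinf_norm_ge_real[OF HB nz f] \<open>Im z \<ge> 0\<close> in auto)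
  then show ?thesis
    using hermite_biehler_nonzero[OF HB nz \<open>Im z \<ge> 0\<close>] by (simp add: norm_divide divide_le_eq)
qed

text \<open>The quotient \<open>G\<^sup># / G\<close> is holomorphic and bounded on the closed upper half-plane and
  unimodular on the real line, so Phragmen-Lindelof bounds it by \<open>1\<close>.\<close>

lemma weakly_hermite_biehler_mult_diff:
  assumes E: "weakly_hermite_biehler E" and E_nz: "\<And>z. Im z \<ge> 0 \<Longrightarrow> E z \<noteq> 0"
    and holf: "f holomorphic_on UNIV"
    and f_le: "\<And>z. Im z \<ge> 0 \<Longrightarrow> cmod (f z) \<le> M * cmod (E z)"
    and sharp_bounded: "bounded ((\<lambda>z. sharp f z / E z) ` {z. Im z > 0})"
    and "M < cmod c"
  shows "weakly_hermite_biehler (\<lambda>z. c * E z - f z)"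
proof -
  define G where "G = (\<lambda>z. c * E z - f z)"
  have holE: "E holomorphic_on UNIV" using E by (simp add: weakly_hermite_biehler_def)
  have holG: "G holomorphic_on UNIV" unfolding G_def by (intro holomorphic_intros holE holf)
  have G_ge: "(cmod c - M) * cmod (E z) \<le> cmod (G z)" if "Im z \<ge> 0" for z
    using norm_triangle_ineq2[of "c * E z" "f z"] f_le[OF that]
    by (simp add: G_def norm_mult algebra_simps)
  have G_nz: "G z \<noteq> 0" if "Im z \<ge> 0" for z
  proof -
    have "0 < (cmod c - M) * cmod (E z)" using E_nz[OF that] \<open>M < cmod c\<close> by simp
    with G_ge[OF that] show ?thesis by auto
  qed
  obtain K where K: "\<forall>z\<in>{z. Im z > 0}. cmod (sharp f z / E z) \<le> K"
    using sharp_bounded unfolding bounded_iff by auto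
  define q where "q z = cnj (G (cnj z)) / G z" for z
  have q_le_1: "cmod (q z) \<le> 1" if "Im z > 0" for z
  proof (rule phragmen_lindelof_upper_half_plane[where g = q and U = "{z. G z \<noteq> 0}"])
    have "(\<lambda>z. cnj (G (cnj z))) holomorphic_on UNIV"
      using holomorphic_on_compose_cnj_cnj[OF holomorphic_on_subset[OF holG subset_UNIV] open_UNIV]
      by (simp add: o_def)
    then show "q holomorphic_on {z. G z \<noteq> 0}"
      unfolding q_def by (intro holomorphic_intros holomorphic_on_subset[OF holG]) auto
    show "open {z. G z \<noteq> 0}"
      by (intro open_Collect_neq holomorphic_on_imp_continuous_on holG continuous_on_const)
    show "cmod (q w) \<le> (cmod c + K) / (cmod c - M)" if "Im w > 0" for w
    proof -
      have "E w \<noteq> 0" using E_nz that by simp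
      have "cmod (f (cnj w)) \<le> K * cmod (E w)"
        using K that \<open>E w \<noteq> 0\<close> by (auto simp: sharp_def norm_divide divide_le_eq)
      moreover have "cmod (E (cnj w)) \<le> cmod (E w)"
        using E that by (simp add: weakly_hermite_biehler_def)
      ultimately have "cmod (G (cnj w)) \<le> (cmod c + K) * cmod (E w)"
        using norm_triangle_ineq4[of "c * E (cnj w)" "f (cnj w)"]
          mult_left_mono[of "cmod (E (cnj w))" "cmod (E w)" "cmod c"]
        by (simp add: G_def norm_mult algebra_simps)
      then have "cmod (q w) \<le> (cmod c + K) * cmod (E w) / ((cmod c - M) * cmod (E w))"
        unfolding q_def norm_divide complex_mod_cnj
        using G_ge[of w] that \<open>M < cmod c\<close> \<open>E w \<noteq> 0\<close>
        by (intro frac_le) (auto intro: order_trans[OF norm_ge_zero])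
      then show ?thesis using \<open>E w \<noteq> 0\<close> by simp
    qed
  qed (use G_nz that in \<open>auto simp: q_def norm_divide\<close>)
  have "cmod (G (cnj z)) \<le> cmod (G z)" if "Im z > 0" for z
  proof -
    have "0 < cmod (G z)" using G_nz[of z] that by simp
    moreover have "cmod (G (cnj z)) / cmod (G z) \<le> 1" using q_le_1[OF that] by (simp add: q_def norm_divide)
    ultimately show ?thesis by (simp add: divide_le_eq)
  qed
  with holG show ?thesis by (simp add: weakly_hermite_biehler_def G_def)
qed

lemma turns_clockwise_Im_neg_right:
  fixes e :: "real \<Rightarrow> complex"
  assumes cont: "continuous_on UNIV e" and cw: "turns_clockwise e"
    and e_\<xi>: "Im (e \<xi>) = 0" "Re (e \<xi>) > 0"
    and zero_free: "\<And>t. \<xi> < t \<Longrightarrow> t < b \<Longrightarrow> Im (e t) \<noteq> 0"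
    and t: "\<xi> < t" "t < b"
  shows "Im (e t) < 0"
proof (rule ccontr)
  assume "\<not> Im (e t) < 0"
  with zero_free t have "Im (e t) > 0" by force
  have pos: "Im (e y) > 0" if y: "\<xi> < y" "y \<le> t" for y
  proof (rule ccontr)
    assume "\<not> Im (e y) > 0"
    moreover have "continuous_on {y..t} (\<lambda>s. Im (e s))"
      by (intro continuous_on_Im continuous_on_subset[OF cont]) auto
    ultimately obtain z where "y \<le> z" "z \<le> t" "Im (e z) = 0"
      using IVT'[of "\<lambda>s. Im (e s)" y 0 t] y \<open>Im (e t) > 0\<close> by auto
    with zero_free y t show False by force
  qed
  define \<kappa> where "\<kappa> = Re (e t) / Im (e t)"
  have "Re (e y) - \<kappa> * Im (e y) \<le> 0" if "y \<in> {\<xi><..t}" for y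
  proof -
    from that have "\<forall>s\<in>{y..t}. Im (e s) > 0" by (auto intro!: pos)
    then have "\<forall>s\<in>{y..t}. Im (e s) \<noteq> 0" by force
    with cw that have "Re (e y) / Im (e y) \<le> \<kappa>" by (auto simp: turns_clockwise_def \<kappa>_def)
    with pos[of y] that show ?thesis by (simp add: divide_le_eq)
  qed
  moreover have "continuous_on (closure {\<xi><..t}) (\<lambda>y. Re (e y) - \<kappa> * Im (e y))"
    using cont by (intro continuous_intros continuous_on_subset[OF cont]) auto
  ultimately have "Re (e \<xi>) - \<kappa> * Im (e \<xi>) \<le> 0"
    using t continuous_le_on_closure[of "{\<xi><..t}" "\<lambda>y. Re (e y) - \<kappa> * Im (e y)" \<xi> 0] by simp
  with e_\<xi> show False by simp
qed

text \<open>If \<open>g x < M Re (e x)\<close>, then for small \<open>\<epsilon> > 0\<close> the function \<open>c e - g\<close> with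
  \<open>c = M (1 - \<i> \<epsilon>)\<^sup>2\<close>, \<open>cmod c = M (1 + \<epsilon>\<^sup>2) > M\<close>, has negative imaginary part on \<open>[\<xi>, x]\<close>,
  but its real part changes sign from negative at \<open>\<xi>\<close> to positive at \<open>x\<close>: its argument
  increases.\<close>

lemma turns_clockwise_lower_bound_at:
  fixes e :: "real \<Rightarrow> complex" and g :: "real \<Rightarrow> real"
  assumes "M > 0" and e_\<xi>: "Im (e \<xi>) = 0" "Re (e \<xi>) > 0" and g_\<xi>: "g \<xi> = M * Re (e \<xi>)"
    and cw: "turns_clockwise e"
    and cw_family: "\<And>c. M < cmod c \<Longrightarrow> turns_clockwise (\<lambda>x. c * e x - of_real (g x))"
    and "\<xi> < x" and neg: "\<And>t. \<xi> < t \<Longrightarrow> t \<le> x \<Longrightarrow> Im (e t) < 0"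
  shows "M * Re (e x) \<le> g x"
proof (rule ccontr)
  assume "\<not> ?thesis"
  define \<kappa> where "\<kappa> = Re (e x) / Im (e x)"
  have ratio: "\<kappa> * Im (e y) \<le> Re (e y)" if "\<xi> < y" "y \<le> x" for y
  proof -
    from that have "\<forall>s\<in>{y..x}. Im (e s) < 0" by (auto intro!: neg)
    then have "\<forall>s\<in>{y..x}. Im (e s) \<noteq> 0" by force
    with cw that have "Re (e y) / Im (e y) \<le> \<kappa>" by (auto simp: turns_clockwise_def \<kappa>_def)
    with neg[of y] that show ?thesis by (simp add: divide_le_eq)
  qed
  have "\<forall>\<^sub>F \<epsilon> in at_right 0. 0 < \<epsilon> \<and> 0 < 1 - \<epsilon>\<^sup>2 - 2 * \<epsilon> * \<kappa> \<and>
      0 < M * ((1 - \<epsilon>\<^sup>2) * Re (e x) + 2 * \<epsilon> * Im (e x)) - g x"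
  proof (intro eventually_conj eventually_at_right_less)
    have "((\<lambda>\<epsilon>. 1 - \<epsilon>\<^sup>2 - 2 * \<epsilon> * \<kappa>) \<longlongrightarrow> 1 - 0\<^sup>2 - 2 * 0 * \<kappa>) (at_right 0)"
      by (intro tendsto_intros)
    then show "\<forall>\<^sub>F \<epsilon> in at_right 0. 0 < 1 - \<epsilon>\<^sup>2 - 2 * \<epsilon> * \<kappa>"
      by (rule order_tendstoD) simp
    have "((\<lambda>\<epsilon>. M * ((1 - \<epsilon>\<^sup>2) * Re (e x) + 2 * \<epsilon> * Im (e x)) - g x) \<longlongrightarrow>
        M * ((1 - 0\<^sup>2) * Re (e x) + 2 * 0 * Im (e x)) - g x) (at_right 0)"
      by (intro tendsto_intros)
    then show "\<forall>\<^sub>F \<epsilon> in at_right 0. 0 < M * ((1 - \<epsilon>\<^sup>2) * Re (e x) + 2 * \<epsilon> * Im (e x)) - g x"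
      by (rule order_tendstoD) (use \<open>\<not> M * Re (e x) \<le> g x\<close> in simp)
  qed
  then obtain \<epsilon> where "0 < \<epsilon>" and \<epsilon>_\<kappa>: "0 < 1 - \<epsilon>\<^sup>2 - 2 * \<epsilon> * \<kappa>"
    and Re_x: "0 < M * ((1 - \<epsilon>\<^sup>2) * Re (e x) + 2 * \<epsilon> * Im (e x)) - g x"
    using eventually_happens'[OF trivial_limit_at_right_real] by blast
  define c where "c = of_real M * (1 - \<i> * of_real \<epsilon>)\<^sup>2"
  define G where "G y = c * e y - of_real (g y)" for y
  have "cmod c = M * (1 + \<epsilon>\<^sup>2)"
    using \<open>M > 0\<close> by (simp add: c_def norm_mult norm_power cmod_power2)
  with \<open>M > 0\<close> \<open>0 < \<epsilon>\<close> have "M < cmod c" by simp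
  have Re_G: "Re (G y) = M * ((1 - \<epsilon>\<^sup>2) * Re (e y) + 2 * \<epsilon> * Im (e y)) - g y" for y
    by (simp add: G_def c_def power2_eq_square algebra_simps)
  have Im_G: "Im (G y) = M * ((1 - \<epsilon>\<^sup>2) * Im (e y) - 2 * \<epsilon> * Re (e y))" for y
    by (simp add: G_def c_def power2_eq_square algebra_simps)
  have Im_G_neg: "Im (G y) < 0" if "\<xi> \<le> y" "y \<le> x" for y
  proof (cases "y = \<xi>")
    case True
    then show ?thesis using e_\<xi> \<open>M > 0\<close> \<open>0 < \<epsilon>\<close> by (simp add: Im_G)
  next
    case False
    with that have "Im (e y) < 0" "\<kappa> * Im (e y) \<le> Re (e y)" using neg ratio by auto
    then have "(1 - \<epsilon>\<^sup>2) * Im (e y) - 2 * \<epsilon> * Re (e y) \<le> Im (e y) * (1 - \<epsilon>\<^sup>2 - 2 * \<epsilon> * \<kappa>)"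
      using \<open>0 < \<epsilon>\<close> mult_left_mono[of "\<kappa> * Im (e y)" "Re (e y)" "2 * \<epsilon>"]
      by (simp add: algebra_simps)
    also have "\<dots> < 0" using \<open>Im (e y) < 0\<close> \<epsilon>_\<kappa> by (simp add: mult_neg_pos)
    finally show ?thesis using \<open>M > 0\<close> by (simp add: Im_G mult_pos_neg)
  qed
  have "Re (G \<xi>) / Im (G \<xi>) \<le> Re (G x) / Im (G x)"
    using cw_family[OF \<open>M < cmod c\<close>] Im_G_neg \<open>\<xi> < x\<close>
    unfolding turns_clockwise_def G_def by (metis atLeastAtMost_iff less_irrefl less_imp_le)
  moreover have "Re (G \<xi>) < 0"
    using e_\<xi> g_\<xi> \<open>M > 0\<close> \<open>0 < \<epsilon>\<close> by (simp add: Re_G algebra_simps)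
  moreover have "Re (G x) > 0" using Re_x by (simp add: Re_G)
  ultimately show False
    using Im_G_neg[of \<xi>] Im_G_neg[of x] \<open>\<xi> < x\<close>
    by (smt (verit) divide_neg_neg divide_pos_neg)
qed

lemma turns_clockwise_lower_bound_right:
  fixes e :: "real \<Rightarrow> complex" and g :: "real \<Rightarrow> real"
  assumes cont: "continuous_on UNIV e" "continuous_on UNIV g"
    and "M > 0" and e_\<xi>: "Im (e \<xi>) = 0" "Re (e \<xi>) > 0" and g_\<xi>: "g \<xi> = M * Re (e \<xi>)"
    and cw: "turns_clockwise e"
    and cw_family: "\<And>c. M < cmod c \<Longrightarrow> turns_clockwise (\<lambda>x. c * e x - of_real (g x))"
    and zero_free: "\<And>t. \<xi> < t \<Longrightarrow> t < b \<Longrightarrow> Im (e t) \<noteq> 0"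
    and x: "\<xi> \<le> x" "x \<le> b" and "\<xi> < b"
  shows "M * Re (e x) \<le> g x"
proof -
  have "M * Re (e y) - g y \<le> 0" if "y \<in> {\<xi><..<b}" for y
    using turns_clockwise_lower_bound_at[OF \<open>M > 0\<close> e_\<xi> g_\<xi> cw cw_family, of y]
      turns_clockwise_Im_neg_right[OF cont(1) cw e_\<xi> zero_free] that
    by force
  moreover have "continuous_on (closure {\<xi><..<b}) (\<lambda>y. M * Re (e y) - g y)"
    by (intro continuous_intros continuous_on_subset[OF cont(1)] continuous_on_subset[OF cont(2)])
      auto
  ultimately have "M * Re (e x) - g x \<le> 0"
    using x \<open>\<xi> < b\<close> continuous_le_on_closure[of "{\<xi><..<b}" "\<lambda>y. M * Re (e y) - g y" x 0]
    by simp
  then show ?thesis by simp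
qed

text \<open>The left half follows from the right one applied to the reflection
  \<open>x \<mapsto> cnj (e (- x))\<close>, which again turns clockwise.\<close>

lemma turns_clockwise_lower_bound:
  fixes e :: "real \<Rightarrow> complex" and g :: "real \<Rightarrow> real"
  assumes cont: "continuous_on UNIV e" "continuous_on UNIV g"
    and "M > 0" and e_\<xi>: "Im (e \<xi>) = 0" "Re (e \<xi>) > 0" and g_\<xi>: "g \<xi> = M * Re (e \<xi>)"
    and cw: "turns_clockwise e"
    and cw_family: "\<And>c. M < cmod c \<Longrightarrow> turns_clockwise (\<lambda>x. c * e x - of_real (g x))"
    and "a < \<xi>" "\<xi> < b"
    and zero_free: "\<And>t. a < t \<Longrightarrow> t < b \<Longrightarrow> t \<noteq> \<xi> \<Longrightarrow> Im (e t) \<noteq> 0"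
    and x: "a \<le> x" "x \<le> b"
  shows "M * Re (e x) \<le> g x"
proof (cases "\<xi> \<le> x")
  case True
  show ?thesis
    by (rule turns_clockwise_lower_bound_right[OF assms(1-8) _ True x(2) \<open>\<xi> < b\<close>])
      (use zero_free \<open>a < \<xi>\<close> in auto)
next
  case False
  have "M * Re (cnj (e (- (- x)))) \<le> g (- (- x))"
  proof (rule turns_clockwise_lower_bound_right[where e = "\<lambda>y. cnj (e (- y))" and g = "\<lambda>y. g (- y)"
        and \<xi> = "- \<xi>" and b = "- a" and x = "- x"])
    show "continuous_on UNIV (\<lambda>y. cnj (e (- y)))" "continuous_on UNIV (\<lambda>y. g (- y))"
      by (intro continuous_intros continuous_on_compose2[OF cont(1)] continuous_on_compose2[OF cont(2)];
          auto)+
    show "turns_clockwise (\<lambda>y. cnj (e (- y)))" by (rule turns_clockwise_reflect[OF cw])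
    show "turns_clockwise (\<lambda>y. c * cnj (e (- y)) - of_real (g (- y)))" if "M < cmod c" for c
      using turns_clockwise_reflect[OF cw_family[of "cnj c"]] that by simp
  qed (use assms False in auto)
  then show ?thesis by simp
qed

lemma continuous_on_of_real_holomorphic:
  "g holomorphic_on UNIV \<Longrightarrow> continuous_on UNIV (\<lambda>x::real. g (of_real x))"
  by (rule continuous_on_compose2[OF holomorphic_on_imp_continuous_on continuous_on_of_real[OF continuous_on_id]])
    auto

lemma A_fun_real: "A_fun E \<alpha> (of_real x) = of_real (Re (E_rot E \<alpha> (of_real x)))"
  by (simp add: A_fun_def sharp_def complex_add_cnj)

lemma B_fun_real: "B_fun E \<alpha> (of_real x) = of_real (Im (E_rot E \<alpha> (of_real x)))"
  by (simp add: B_fun_def sharp_def complex_diff_cnj field_simps)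

lemma E_rot_eq_cmult: "E_rot E \<alpha> = (\<lambda>z. exp (\<i> * of_real \<alpha>) * E z)"
  by (simp add: E_rot_def fun_eq_iff)

lemma E_rot_holomorphic: "hermite_biehler E \<Longrightarrow> E_rot E \<alpha> holomorphic_on UNIV"
  unfolding E_rot_eq_cmult hermite_biehler_def entire_def by (intro holomorphic_intros) simp

lemma E_rot_at_phase:
  assumes "E z = exp (- \<i> * of_real \<alpha>) * of_real r"
  shows "E_rot E \<alpha> z = of_real r"
proof -
  have "E_rot E \<alpha> z = exp (\<i> * of_real \<alpha>) * exp (- \<i> * of_real \<alpha>) * of_real r"
    using assms by (simp add: E_rot_def)
  then show ?thesis by (simp flip: exp_add)
qed

lemma E_rot_turns_clockwise:
  "hermite_biehler E \<Longrightarrow> turns_clockwise (\<lambda>x. E_rot E \<alpha> (of_real x))"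
  unfolding E_rot_eq_cmult
  by (intro weakly_hermite_biehler_turns_clockwise weakly_hermite_biehler_cmult
      hermite_biehler_imp_weakly_hermite_biehler)

lemma Hinf_turns_clockwise:
  assumes HB: "hermite_biehler E" and nz: "\<forall>x::real. E (of_real x) \<noteq> 0"
    and f: "f \<in> Hinf E" and c: "Hinf_norm E f < cmod c"
  shows "turns_clockwise (\<lambda>x. c * E_rot E \<alpha> (of_real x) - f (of_real x))"
proof -
  have "weakly_hermite_biehler (\<lambda>z. (c * exp (\<i> * of_real \<alpha>)) * E z - f z)"
  proof (rule weakly_hermite_biehler_mult_diff)
    show "weakly_hermite_biehler E" using HB by (rule hermite_biehler_imp_weakly_hermite_biehler)
    show "f holomorphic_on UNIV" "bounded ((\<lambda>z. sharp f z / E z) ` {z. Im z > 0})"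
      using f by (auto simp: Hinf_def entire_def)
    show "Hinf_norm E f < cmod (c * exp (\<i> * of_real \<alpha>))" using c by (simp add: norm_mult)
  qed (use hermite_biehler_nonzero[OF HB nz] Hinf_norm_bound[OF HB nz f] in auto)
  from weakly_hermite_biehler_turns_clockwise[OF this] show ?thesis
    by (simp add: E_rot_def mult.assoc)
qed

theorem theorem1:
  fixes E f :: "complex \<Rightarrow> complex" and \<xi> \<alpha> b\<^sub>l b\<^sub>r :: real
  assumes HB: "hermite_biehler E"
    and no_real_zeros: "\<forall>x::real. E (complex_of_real x) \<noteq> 0"
    and f_real: "real_entire f"
    and f_Hinf: "f \<in> Hinf E"
    and f_xi: "f (complex_of_real \<xi>) = complex_of_real (cmod (E (complex_of_real \<xi>)) * Hinf_norm E f)"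
    and alpha: "E (complex_of_real \<xi>) = exp (- \<i> * complex_of_real \<alpha>) * complex_of_real (cmod (E (complex_of_real \<xi>)))"
    and bl: "b\<^sub>l < \<xi>" "B_fun E \<alpha> (complex_of_real b\<^sub>l) = 0"
            "\<forall>t. b\<^sub>l < t \<and> t < \<xi> \<longrightarrow> B_fun E \<alpha> (complex_of_real t) \<noteq> 0"
    and br: "\<xi> < b\<^sub>r" "B_fun E \<alpha> (complex_of_real b\<^sub>r) = 0"
            "\<forall>t. \<xi> < t \<and> t < b\<^sub>r \<longrightarrow> B_fun E \<alpha> (complex_of_real t) \<noteq> 0"
  shows "\<forall>x. b\<^sub>l \<le> x \<and> x \<le> b\<^sub>r \<longrightarrow>
           Re (f (complex_of_real x)) \<ge> Hinf_norm E f * Re (A_fun E \<alpha> (complex_of_real x))"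
proof -
  define M where "M = Hinf_norm E f"
  define e where "e = (\<lambda>x. E_rot E \<alpha> (of_real x))"
  define g where "g = (\<lambda>x. Re (f (of_real x)))"
  have f_real_axis: "f (of_real x) = of_real (g x)" for x
    using f_real by (simp add: real_entire_def g_def complex_is_Real_iff complex_eq_iff)
  have e_\<xi>: "e \<xi> = of_real (cmod (E (of_real \<xi>)))"
    unfolding e_def by (rule E_rot_at_phase[where E = E and z = "of_real \<xi>", OF alpha])
  have "M * Re (e x) \<le> g x" if "b\<^sub>l \<le> x" "x \<le> b\<^sub>r" for x
  proof (cases "M = 0")
    case True
    then show ?thesis
      using Hinf_norm_bound[OF HB no_real_zeros f_Hinf, of "of_real x"] f_real_axis by (simp add: M_def)
  next
    case False
    with Hinf_norm_nonneg[OF HB no_real_zeros f_Hinf] have "M > 0" by (simp add: M_def)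
    show ?thesis
    proof (rule turns_clockwise_lower_bound[OF _ _ \<open>M > 0\<close> _ _ _ _ _ bl(1) br(1) _ that])
      show "continuous_on UNIV e" "continuous_on UNIV g"
        unfolding e_def g_def using E_rot_holomorphic[OF HB] f_real
        by (simp_all add: continuous_on_of_real_holomorphic continuous_on_Re real_entire_def entire_def)
      show "Im (e \<xi>) = 0" "Re (e \<xi>) > 0" "g \<xi> = M * Re (e \<xi>)"
        using e_\<xi> f_xi no_real_zeros by (simp_all add: g_def M_def)
      show "turns_clockwise e" unfolding e_def using HB by (rule E_rot_turns_clockwise)
      show "turns_clockwise (\<lambda>x. c * e x - of_real (g x))" if "M < cmod c" for c
        using Hinf_turns_clockwise[OF HB no_real_zeros f_Hinf, of c \<alpha>] that f_real_axis
        by (simp add: e_def M_def)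
      show "Im (e t) \<noteq> 0" if "b\<^sub>l < t" "t < b\<^sub>r" "t \<noteq> \<xi>" for t
        using bl(3) br(3) that by (auto simp: e_def B_fun_real neq_iff)
    qed
  qed
  then show ?thesis by (simp add: A_fun_real M_def e_def g_def)
qed

end
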